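(* Let $p$ be a prime and let $(M\ N)$ be a coprime symmetric pair of $2\times 2$ integer matrices with $\operatorname{rank}_p M=1$, where $$M=\begin{pmatrix} m_1&m_2\\ p m_3&p m_4\end{pmatrix},\qquad N=\begin{pmatrix} n_1&n_2\\ n_3&n_4\end{pmatrix}$$ with $m_i,n_i\in\mathbb Z$. Then $p\mid m_1$ if and only if $p\mid n_4$, and $p\mid m_2$ if and only if $p\mid n_3$.
   Context: A pair $(M\ N)$ of $2\times 2$ matrices is called symmetric if $M\,{}^tN=N\,{}^tM$. It is a coprime pair if $M,N$ are integral and, for a $2\times 2$ rational matrix $G$, the pair $(GM\ GN)$ is integral only if $G$ is integral; equivalently, the $2\times 4$ matrix $(M\ N)$ has rank $2$ modulo every prime. $\operatorname{rank}_p M$ denotes the rank of $M$ modulo $p$. *)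

theory Defs
  imports "HOL-Analysis.Analysis"
begin

text \<open>2x2 integer matrices are represented as int^2^2 (rows indexed by 1,2).\<close>

definition symmetric_pair :: "int^2^2 \<Rightarrow> int^2^2 \<Rightarrow> bool" where
  "symmetric_pair M N \<longleftrightarrow> M ** transpose N = N ** transpose M"

definition rat_mat :: "int^2^2 \<Rightarrow> rat^2^2" where
  "rat_mat M = (\<chi> i j. of_int (M $ i $ j))"

definition integral_mat :: "rat^2^2 \<Rightarrow> bool" where
  "integral_mat A \<longleftrightarrow> (\<forall>i j. A $ i $ j \<in> \<int>)"

definition coprime_pair :: "int^2^2 \<Rightarrow> int^2^2 \<Rightarrow> bool" where
  "coprime_pair M N \<longleftrightarrow>
     (\<forall>G :: rat^2^2. integral_mat (G ** rat_mat M) \<and> integral_mat (G ** rat_mat N)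
        \<longrightarrow> integral_mat G)"

text \<open>Rank of a 2x2 integer matrix modulo p (determinantal rank: the largest size of
  a minor that is nonzero modulo p).\<close>
definition rank_mod :: "int \<Rightarrow> int^2^2 \<Rightarrow> nat" where
  "rank_mod p M =
     (if \<not> p dvd det M then 2
      else if (\<exists>i j. \<not> p dvd M $ i $ j) then 1 else 0)"

end

theory Submission
  imports Defs
begin

text \<open>The off-diagonal entry of the symmetry relation reads
  \<open>m\<^sub>1 n\<^sub>3 + m\<^sub>2 n\<^sub>4 = p (m\<^sub>3 n\<^sub>1 + m\<^sub>4 n\<^sub>2)\<close>, so \<open>p\<close> divides \<open>m\<^sub>1 n\<^sub>3 + m\<^sub>2 n\<^sub>4\<close>.
  Rank one forces \<open>(m\<^sub>1, m\<^sub>2) \<noteq> 0\<close> mod \<open>p\<close>, and coprimality forbids \<open>(n\<^sub>3, n\<^sub>4) \<equiv> 0\<close>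
  mod \<open>p\<close>, since otherwise \<open>diag(1, 1/p)\<close> would make the pair integral.
  A vanishing "determinant" \<open>m\<^sub>1 n\<^sub>3 + m\<^sub>2 n\<^sub>4\<close> of two nonzero vectors over \<open>\<int>/p\<close> then
  makes the zero patterns match as claimed.\<close>

lemma symmetric_pair_offdiag:
  assumes "symmetric_pair M N"
  shows "M$1$1 * N$2$1 + M$1$2 * N$2$2 = N$1$1 * M$2$1 + N$1$2 * M$2$2"
proof -
  have "(M ** transpose N) $ 1 $ 2 = (N ** transpose M) $ 1 $ 2"
    using assms unfolding symmetric_pair_def by simp
  then show ?thesis
    by (simp add: matrix_matrix_mult_def transpose_def sum_2)
qed

lemma rank_mod_eq_0_iff: "rank_mod p M = 0 \<longleftrightarrow> (\<forall>i j. p dvd M $ i $ j)"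
  by (auto simp: rank_mod_def det_2)

lemma coprime_pair_second_rows_not_dvd:
  fixes p :: int
  assumes "coprime_pair M N" and "\<bar>p\<bar> \<noteq> 1" and "p \<noteq> 0"
  shows "\<not> (\<forall>j. p dvd M $ 2 $ j \<and> p dvd N $ 2 $ j)"
proof
  assume dvd: "\<forall>j. p dvd M $ 2 $ j \<and> p dvd N $ 2 $ j"
  define G :: "rat^2^2" where "G = (\<chi> i j. if i = j then (if i = 1 then 1 else 1 / of_int p) else 0)"
  have G: "G $ 1 $ 1 = 1" "G $ 1 $ 2 = 0" "G $ 2 $ 1 = 0" "G $ 2 $ 2 = 1 / of_int p"
    unfolding G_def by simp_all
  have divided_row_integral: "(1 / of_int p :: rat) * of_int (A $ 2 $ j) \<in> \<int>"
    if "p dvd A $ 2 $ j" for A :: "int^2^2" and j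
  proof -
    from that obtain k where "A $ 2 $ j = p * k" by (elim dvdE)
    with \<open>p \<noteq> 0\<close> show ?thesis by simp
  qed
  have "integral_mat (G ** rat_mat A)" if "\<forall>j. p dvd A $ 2 $ j" for A
    using divided_row_integral that
    by (simp add: integral_mat_def forall_2 matrix_matrix_mult_def sum_2 G rat_mat_def)
  with dvd assms(1) have "integral_mat G"
    unfolding coprime_pair_def by blast
  then obtain k where "1 / (of_int p :: rat) = of_int k"
    using G unfolding integral_mat_def by (metis Ints_cases)
  with \<open>p \<noteq> 0\<close> have "of_int (k * p) = (1 :: rat)"
    by (simp add: field_simps)
  then have "p dvd 1"
    by (metis dvd_triv_right of_int_eq_1_iff)
  with \<open>\<bar>p\<bar> \<noteq> 1\<close> show False
    by simp
qed

lemma prime_dvd_pairing_zero_patterns: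
  fixes p a b c d :: int
  assumes "prime p" and "p dvd a * c + b * d"
    and "\<not> (p dvd a \<and> p dvd b)" and "\<not> (p dvd c \<and> p dvd d)"
  shows "(p dvd a \<longleftrightarrow> p dvd d) \<and> (p dvd b \<longleftrightarrow> p dvd c)"
  using assms by (metis dvd_add_right_iff dvd_add_left_iff dvd_mult prime_dvd_mult_iff)

theorem lemma3p1:
  fixes p m1 m2 m3 m4 n1 n2 n3 n4 :: int
  assumes "prime p"
    and "M = vector [vector [m1, m2], vector [p * m3, p * m4]]"
    and "N = vector [vector [n1, n2], vector [n3, n4]]"
    and "symmetric_pair M N"
    and "coprime_pair M N"
    and "rank_mod p M = 1"
  shows "(p dvd m1 \<longleftrightarrow> p dvd n4) \<and> (p dvd m2 \<longleftrightarrow> p dvd n3)"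
proof (rule prime_dvd_pairing_zero_patterns[OF \<open>prime p\<close>])
  have M: "M$1$1 = m1" "M$1$2 = m2" "M$2$1 = p * m3" "M$2$2 = p * m4"
    and N: "N$1$1 = n1" "N$1$2 = n2" "N$2$1 = n3" "N$2$2 = n4"
    using assms(2,3) by simp_all
  show "p dvd m1 * n3 + m2 * n4"
    using symmetric_pair_offdiag[OF assms(4)] by (simp add: M N)
  show "\<not> (p dvd m1 \<and> p dvd m2)"
    using assms(6) rank_mod_eq_0_iff[of p M] by (auto simp: forall_2 M)
  have "\<bar>p\<bar> \<noteq> 1" "p \<noteq> 0"
    using \<open>prime p\<close> by (auto simp: prime_int_iff)
  then show "\<not> (p dvd n3 \<and> p dvd n4)"
    using coprime_pair_second_rows_not_dvd[OF assms(5)] by (auto simp: forall_2 M N)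
qed

end
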